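(* Let $\mathcal{S}_m\subset\mathcal{S}_n\subset\mathcal{T}$ be nested subsets of the training set with $m<n$ elements respectively, and let $L_m,L_n$ be their empirical losses. Then for every $\mathbf{w}\in\mathbb{R}^p$, $$\mathbb{E}\left[|L_n(\mathbf{w})-L_m(\mathbf{w})|\right]\le\frac{n-m}{n}\left(V_{n-m}+V_m\right).$$
   Context: Let $Z$ be a random variable with distribution $P$ on a space $\mathcal{Z}$ and $f:\mathbb{R}^p\times\mathcal{Z}\to\mathbb{R}$ a loss function, with expected loss $L(\mathbf{w})=\mathbb{E}_Z[f(\mathbf{w},Z)]$. The training set $\mathcal{T}=\{z_1,\dots,z_N\}$ consists of $N$ independent samples from $P$. For a (fixed, data-independent) subset $\mathcal{S}\subseteq\mathcal{T}$ with $k$ elements, $L_{\mathcal{S}}(\mathbf{w})=\frac1k\sum_{z\in\mathcal{S}}f(\mathbf{w},z)$; for the sets $\mathcal{S}_k$ we write $L_k=L_{\mathcal{S}_k}$. Standing assumption: there are constants $V_k$ such that for every $k$ and every set $\mathcal{S}$ of $k$ independent samples from $P$, $\mathbb{E}[\sup_{\mathbf{w}\in\mathbb{R}^p}|L(\mathbf{w})-L_{\mathcal{S}}(\mathbf{w})|]\le V_k$ (expectation over the samples). *)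

theory Defs
  imports "HOL-Probability.Probability"
begin

definition exp_loss :: "('w \<Rightarrow> 'z \<Rightarrow> real) \<Rightarrow> 'z measure \<Rightarrow> 'w \<Rightarrow> real" where
  "exp_loss f P w = (\<integral>z. f w z \<partial>P)"

text \<open>Empirical loss on the subset S = {z_i | i in I} of the training set, as a function
  of the sample outcome x: L_S(w) = (1/|I|) * sum_{i in I} f(w, z_i).\<close>
definition emp_loss :: "('w \<Rightarrow> 'z \<Rightarrow> real) \<Rightarrow> (nat \<Rightarrow> 'a \<Rightarrow> 'z) \<Rightarrow> nat set \<Rightarrow> 'w \<Rightarrow> 'a \<Rightarrow> real" where
  "emp_loss f Z I w x = (1 / real (card I)) * (\<Sum>i\<in>I. f w (Z i x))"

end

theory Submission
  imports Defs
begin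

text \<open>Splitting S_n into S_m and D = S_n - S_m, the empirical loss on S_n is the convex combination
  (m/n) L_m + ((n-m)/n) L_D, so L_n - L_m = ((n-m)/n) (L_D - L_m); bounding |L_D - L_m| by the
  uniform deviations of L_D and L_m from L and integrating gives the claim. When some V_k is
  negative, the truncation to ennreal makes that bound useless; instead all k-subset averages equal
  L almost surely, which forces every single loss f(w, z_i) to equal L almost surely.\<close>

definition uniform_deviation ::
    "('w \<Rightarrow> 'z \<Rightarrow> real) \<Rightarrow> 'z measure \<Rightarrow> (nat \<Rightarrow> 'a \<Rightarrow> 'z) \<Rightarrow> nat set \<Rightarrow> 'a \<Rightarrow> ennreal" where
  "uniform_deviation f P Z I x = (SUP v. ennreal \<bar>exp_loss f P v - emp_loss f Z I v x\<bar>)"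

lemma abs_exp_loss_minus_emp_loss_le_uniform_deviation:
  "ennreal \<bar>exp_loss f P w - emp_loss f Z I w x\<bar> \<le> uniform_deviation f P Z I x"
  unfolding uniform_deviation_def by (rule SUP_upper) simp

lemma const_if_sums_over_card_subsets_const:
  fixes g :: "'b \<Rightarrow> real"
  assumes fin: "finite S" and k: "1 \<le> k" "k < card S"
    and sums: "\<And>I. I \<subseteq> S \<Longrightarrow> card I = k \<Longrightarrow> sum g I = real k * c"
    and i: "i \<in> S"
  shows "g i = c"
proof -
  have eq: "g j = g j'" if "j \<in> S" "j' \<in> S" "j \<noteq> j'" for j j'
  proof -
    have "k - 1 \<le> card (S - {j, j'})"
      using that fin k by (simp add: card_Diff_subset)
    then obtain T where T: "T \<subseteq> S - {j, j'}" "card T = k - 1"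
      by (metis obtain_subset_with_card_n)
    have "finite T" using T fin finite_subset by blast
    have "sum g (insert j T) = real k * c" "sum g (insert j' T) = real k * c"
      using T \<open>finite T\<close> that k by (auto intro!: sums simp: card_insert_if)
    moreover have "j \<notin> T" "j' \<notin> T" using T by auto
    ultimately show ?thesis using \<open>finite T\<close> by simp
  qed
  have "k - 1 \<le> card (S - {i})" using i fin k by simp
  then obtain T where T: "T \<subseteq> S - {i}" "card T = k - 1"
    by (metis obtain_subset_with_card_n)
  have "finite T" "i \<notin> T" using T fin finite_subset by blast+
  then have I: "insert i T \<subseteq> S" "card (insert i T) = k" using T i k by auto
  have "real k * c = sum g (insert i T)" using sums[OF I] by simp
  also have "\<dots> = sum (\<lambda>_. g i) (insert i T)" using I(1) i eq by (intro sum.cong) auto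
  also have "\<dots> = real k * g i" using I(2) by simp
  finally show ?thesis using k by simp
qed

lemma AE_emp_loss_eq_exp_loss_if_deviation_integral_zero:
  assumes deviation_zero: "\<And>I. I \<subseteq> S \<Longrightarrow> card I = k \<Longrightarrow>
        uniform_deviation f P Z I \<in> borel_measurable M
        \<and> (\<integral>\<^sup>+ x. uniform_deviation f P Z I x \<partial>M) = 0"
    and fin: "finite S" and k: "1 \<le> k" "k < card S"
  shows "AE x in M. \<forall>I\<subseteq>S. I \<noteq> {} \<longrightarrow> emp_loss f Z I w x = exp_loss f P w"
proof -
  have "AE x in M. emp_loss f Z I w x = exp_loss f P w"
    if I: "I \<subseteq> S" "card I = k" for I
  proof -
    from deviation_zero[OF I] have "AE x in M. uniform_deviation f P Z I x = 0"
      using nn_integral_0_iff_AE by blast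
    then show ?thesis
      by eventually_elim
        (metis abs_exp_loss_minus_emp_loss_le_uniform_deviation le_zero_eq ennreal_eq_0_iff
          abs_ge_zero abs_le_zero_iff eq_iff_diff_eq_0)
  qed
  then have "AE x in M. \<forall>I\<in>{I. I \<subseteq> S \<and> card I = k}. emp_loss f Z I w x = exp_loss f P w"
    using fin by (intro AE_ball_countable' countable_finite) auto
  then show ?thesis
  proof eventually_elim
    case (elim x)
    have const: "f w (Z i x) = exp_loss f P w" if "i \<in> S" for i
    proof (rule const_if_sums_over_card_subsets_const[OF fin k _ that])
      fix I assume "I \<subseteq> S" "card I = k"
      with elim k show "(\<Sum>i\<in>I. f w (Z i x)) = real k * exp_loss f P w"
        by (auto simp: emp_loss_def field_simps)
    qed
    show ?case
    proof (intro allI impI)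
      fix I assume "I \<subseteq> S" "I \<noteq> {}"
      moreover from this have "finite I" using fin finite_subset by blast
      ultimately show "emp_loss f Z I w x = exp_loss f P w"
        using const by (simp add: emp_loss_def subset_eq)
    qed
  qed
qed

lemma nn_integral_abs_emp_loss_minus_emp_loss_eq_0:
  assumes "\<And>I. I \<subseteq> S \<Longrightarrow> card I = k \<Longrightarrow>
        uniform_deviation f P Z I \<in> borel_measurable M
        \<and> (\<integral>\<^sup>+ x. uniform_deviation f P Z I x \<partial>M) = 0"
    and "finite S" "1 \<le> k" "k < card S"
    and "A \<subseteq> S" "A \<noteq> {}" "B \<subseteq> S" "B \<noteq> {}"
  shows "(\<integral>\<^sup>+ x. ennreal \<bar>emp_loss f Z A w x - emp_loss f Z B w x\<bar> \<partial>M) = 0"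
proof -
  have "AE x in M. \<forall>I\<subseteq>S. I \<noteq> {} \<longrightarrow> emp_loss f Z I w x = exp_loss f P w"
    using assms(1-4) by (rule AE_emp_loss_eq_exp_loss_if_deviation_integral_zero)
  then have "AE x in M. ennreal \<bar>emp_loss f Z A w x - emp_loss f Z B w x\<bar> = 0"
    by eventually_elim (use assms(5-8) in auto)
  then have "(\<integral>\<^sup>+ x. ennreal \<bar>emp_loss f Z A w x - emp_loss f Z B w x\<bar> \<partial>M) = (\<integral>\<^sup>+ x. 0 \<partial>M)"
    by (rule nn_integral_cong_AE)
  then show ?thesis by simp
qed

lemma emp_loss_Un_minus_emp_loss:
  assumes "finite A" "finite B" "A \<inter> B = {}" "A \<noteq> {}"
  shows "emp_loss f Z (A \<union> B) w x - emp_loss f Z A w x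
    = real (card B) / real (card (A \<union> B)) * (emp_loss f Z B w x - emp_loss f Z A w x)"
proof (cases "B = {}")
  case False
  define a b sa sb where "a = real (card A)" and "b = real (card B)"
    and "sa = (\<Sum>i\<in>A. f w (Z i x))" and "sb = (\<Sum>i\<in>B. f w (Z i x))"
  have "a > 0" "b > 0" using assms False unfolding a_def b_def by (simp_all add: card_gt_0_iff)
  moreover have "emp_loss f Z (A \<union> B) w x = (sa + sb) / (a + b)"
    and "real (card (A \<union> B)) = a + b"
    using assms unfolding emp_loss_def a_def b_def sa_def sb_def
    by (simp_all add: card_Un_disjoint sum.union_disjoint)
  ultimately show ?thesis
    unfolding emp_loss_def a_def[symmetric] b_def[symmetric] sa_def[symmetric] sb_def[symmetric]
    by (simp add: divide_simps) (simp add: algebra_simps)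
qed simp

lemma abs_emp_loss_Un_minus_emp_loss_le:
  assumes "finite A" "finite B" "A \<inter> B = {}" "A \<noteq> {}"
  shows "ennreal \<bar>emp_loss f Z (A \<union> B) w x - emp_loss f Z A w x\<bar>
    \<le> ennreal (real (card B) / real (card (A \<union> B)))
        * (uniform_deviation f P Z B x + uniform_deviation f P Z A x)"
proof -
  define c where "c = real (card B) / real (card (A \<union> B))"
  define L where "L = exp_loss f P w"
  have "c \<ge> 0" unfolding c_def by simp
  have "\<bar>emp_loss f Z (A \<union> B) w x - emp_loss f Z A w x\<bar>
      = c * \<bar>emp_loss f Z B w x - emp_loss f Z A w x\<bar>"
    unfolding c_def emp_loss_Un_minus_emp_loss[OF assms] abs_mult using \<open>c \<ge> 0\<close> by simp
  also have "\<dots> \<le> c * (\<bar>L - emp_loss f Z B w x\<bar> + \<bar>L - emp_loss f Z A w x\<bar>)"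
    using \<open>c \<ge> 0\<close> by (intro mult_left_mono) auto
  finally have "ennreal \<bar>emp_loss f Z (A \<union> B) w x - emp_loss f Z A w x\<bar>
      \<le> ennreal (c * (\<bar>L - emp_loss f Z B w x\<bar> + \<bar>L - emp_loss f Z A w x\<bar>))"
    by (rule ennreal_leI)
  also have "\<dots> = ennreal c * (ennreal \<bar>L - emp_loss f Z B w x\<bar> + ennreal \<bar>L - emp_loss f Z A w x\<bar>)"
    using \<open>c \<ge> 0\<close> by (simp add: ennreal_mult ennreal_plus)
  also have "\<dots> \<le> ennreal c * (uniform_deviation f P Z B x + uniform_deviation f P Z A x)"
    unfolding L_def
    by (intro mult_left_mono add_mono abs_exp_loss_minus_emp_loss_le_uniform_deviation) simp
  finally show ?thesis unfolding c_def .
qed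

lemma nn_integral_abs_emp_loss_Un_minus_emp_loss_le:
  assumes "finite A" "finite B" "A \<inter> B = {}" "A \<noteq> {}"
    and "uniform_deviation f P Z A \<in> borel_measurable M"
    and "uniform_deviation f P Z B \<in> borel_measurable M"
    and "(\<integral>\<^sup>+ x. uniform_deviation f P Z A x \<partial>M) \<le> ennreal VA"
    and "(\<integral>\<^sup>+ x. uniform_deviation f P Z B x \<partial>M) \<le> ennreal VB"
    and "0 \<le> VA" "0 \<le> VB"
  shows "(\<integral>\<^sup>+ x. ennreal \<bar>emp_loss f Z (A \<union> B) w x - emp_loss f Z A w x\<bar> \<partial>M)
    \<le> ennreal (real (card B) / real (card (A \<union> B)) * (VB + VA))"
proof -
  define c where "c = real (card B) / real (card (A \<union> B))"
  have "c \<ge> 0" unfolding c_def by simp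
  have "(\<integral>\<^sup>+ x. ennreal \<bar>emp_loss f Z (A \<union> B) w x - emp_loss f Z A w x\<bar> \<partial>M)
      \<le> (\<integral>\<^sup>+ x. ennreal c * (uniform_deviation f P Z B x + uniform_deviation f P Z A x) \<partial>M)"
    unfolding c_def by (intro nn_integral_mono abs_emp_loss_Un_minus_emp_loss_le assms(1-4))
  also have "\<dots> = ennreal c * ((\<integral>\<^sup>+ x. uniform_deviation f P Z B x \<partial>M)
      + (\<integral>\<^sup>+ x. uniform_deviation f P Z A x \<partial>M))"
    using assms(5,6) by (simp add: nn_integral_cmult nn_integral_add)
  also have "\<dots> \<le> ennreal c * (ennreal VB + ennreal VA)"
    using assms(7,8) by (intro mult_left_mono add_mono) auto
  also have "\<dots> = ennreal (c * (VB + VA))"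
    using assms(9,10) \<open>c \<ge> 0\<close> by (simp add: ennreal_mult ennreal_plus)
  finally show ?thesis unfolding c_def .
qed

theorem lemma5:
  fixes M :: "'a measure" and P :: "'z measure"
    and f :: "real ^ 'p \<Rightarrow> 'z \<Rightarrow> real"
    and Z :: "nat \<Rightarrow> 'a \<Rightarrow> 'z" and N :: nat and V :: "nat \<Rightarrow> real"
    and Sm Sn :: "nat set" and m n :: nat and w :: "real ^ 'p"
  assumes "prob_space M"
    and "\<And>i. i < N \<Longrightarrow> Z i \<in> measurable M P"
    and "\<And>i. i < N \<Longrightarrow> distr M P (Z i) = P"
    and "prob_space.indep_vars M (\<lambda>_. P) Z {..<N}"
    and standing: "\<And>k I. I \<subseteq> {..<N} \<Longrightarrow> card I = k \<Longrightarrow> 1 \<le> k \<Longrightarrow>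
        (\<lambda>x. SUP v. ennreal \<bar>exp_loss f P v - emp_loss f Z I v x\<bar>) \<in> borel_measurable M
        \<and> (\<integral>\<^sup>+ x. (SUP v. ennreal \<bar>exp_loss f P v - emp_loss f Z I v x\<bar>) \<partial>M) \<le> ennreal (V k)"
    and "Sm \<subset> Sn" and "Sn \<subseteq> {..<N}"
    and "card Sm = m" and "card Sn = n" and "0 < m" and "m < n"
  shows "(\<integral>\<^sup>+ x. ennreal \<bar>emp_loss f Z Sn w x - emp_loss f Z Sm w x\<bar> \<partial>M)
           \<le> ennreal ((real n - real m) / real n * (V (n - m) + V m))"
proof -
  define D where "D = Sn - Sm"
  have "finite Sn" using assms(7) finite_subset by blast
  then have fin: "finite Sm" "finite D"
    using assms(6) unfolding D_def by (auto intro: finite_subset)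
  have Sn_eq: "Sn = Sm \<union> D" and disj: "Sm \<inter> D = {}" and "Sm \<noteq> {}"
    using assms(6,8,10) unfolding D_def by auto
  have card_D: "card D = n - m"
    using assms(6,8,9) fin unfolding D_def by (simp add: card_Diff_subset less_imp_le)
  have deviation_bound: "uniform_deviation f P Z I \<in> borel_measurable M
      \<and> (\<integral>\<^sup>+ x. uniform_deviation f P Z I x \<partial>M) \<le> ennreal (V k)"
    if "I \<subseteq> {..<N}" "card I = k" "1 \<le> k" for I k
    using standing[OF that] unfolding uniform_deviation_def .
  show ?thesis
  proof (cases "V (n - m) < 0 \<or> V m < 0")
    case True
    then obtain k where "k \<in> {n - m, m}" "V k < 0" by auto
    then have k: "1 \<le> k" "k < card Sn" and "V k < 0" using assms(9,10,11) by auto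
    have "uniform_deviation f P Z I \<in> borel_measurable M
        \<and> (\<integral>\<^sup>+ x. uniform_deviation f P Z I x \<partial>M) = 0"
      if "I \<subseteq> Sn" "card I = k" for I
      using deviation_bound[of I k] that k \<open>V k < 0\<close> assms(7) by (auto simp: ennreal_neg)
    then show ?thesis
      using \<open>finite Sn\<close> k \<open>Sm \<noteq> {}\<close> assms(6)
      by (subst nn_integral_abs_emp_loss_minus_emp_loss_eq_0) auto
  next
    case False
    have "Sm \<subseteq> {..<N}" "D \<subseteq> {..<N}" using assms(6,7) unfolding D_def by auto
    then have "(\<integral>\<^sup>+ x. ennreal \<bar>emp_loss f Z (Sm \<union> D) w x - emp_loss f Z Sm w x\<bar> \<partial>M)
        \<le> ennreal (real (card D) / real (card (Sm \<union> D)) * (V (n - m) + V m))"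
      using deviation_bound[of Sm m] deviation_bound[of D "n - m"] False card_D assms(8,10,11)
      by (intro nn_integral_abs_emp_loss_Un_minus_emp_loss_le fin disj \<open>Sm \<noteq> {}\<close>) auto
    then show ?thesis using card_D assms(9,11) Sn_eq by (simp add: of_nat_diff)
  qed
qed

end
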